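(* Let $n\ge 4$ and let $G$ be a graph having the maximum value of $cM_2$ among all connected graphs of order $n$. Then $|M(G)|<\frac{5352}{10000}n$.
   Context: All graphs are finite and simple. For a graph $G$ and a vertex $u$, $d_u(G)$ denotes the degree of $u$ in $G$. The complementary second Zagreb index of $G$ is $cM_2(G)=\sum_{uv\in E(G)}\left|(d_u(G))^2-(d_v(G))^2\right|$. $M(G)$ denotes the set of vertices of $G$ having the maximum degree of $G$. *)

theory Defs
  imports Complex_Main
begin

definition simple_graph :: "'a set \<Rightarrow> 'a set set \<Rightarrow> bool" where
  "simple_graph V E \<longleftrightarrow> finite V \<and>
     (\<forall>e\<in>E. \<exists>u v. e = {u, v} \<and> u \<noteq> v \<and> u \<in> V \<and> v \<in> V)"

definition degree :: "'a set \<Rightarrow> 'a set set \<Rightarrow> 'a \<Rightarrow> nat" where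
  "degree V E u = card {v\<in>V. {u, v} \<in> E}"

definition connected_graph :: "'a set \<Rightarrow> 'a set set \<Rightarrow> bool" where
  "connected_graph V E \<longleftrightarrow> V \<noteq> {} \<and>
     (\<forall>u\<in>V. \<forall>v\<in>V. (u, v) \<in> {(x, y). {x, y} \<in> E}\<^sup>*)"

text \<open>Complementary second Zagreb index: sum over edges uv of |d_u^2 - d_v^2|.
  The double sum over ordered pairs counts each edge twice, hence the division by 2.\<close>
definition cM2 :: "'a set \<Rightarrow> 'a set set \<Rightarrow> int" where
  "cM2 V E = (\<Sum>u\<in>V. \<Sum>v\<in>V. if {u, v} \<in> E
       then \<bar>(int (degree V E u))^2 - (int (degree V E v))^2\<bar> else 0) div 2"

definition max_deg_vertices :: "'a set \<Rightarrow> 'a set set \<Rightarrow> 'a set" where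
  "max_deg_vertices V E = {v\<in>V. degree V E v = Max (degree V E ` V)}"

end

theory Submission
  imports Defs
begin

text \<open>
  Let D be the maximum degree. Since 0 \<le> d(u) \<le> D for every vertex u, each edge term satisfies
  |d(u)^2 - d(v)^2| \<le> (D^2 - d(u)^2) + (D^2 - d(v)^2), and summing over the edges gives
  cM2(G) \<le> \<Sum>u. d(u) (D^2 - d(u)^2). Vertices of maximum degree contribute nothing to this sum,
  and any other vertex at most 2N^3/(3 sqrt 3) < 2N^3/5, where N = n - 1. Hence
  5 cM2(G) \<le> 2 (n - |M(G)|) (n - 1)^3. On the other hand, the complete split graph with a
  clique of k = (2n + 1) div 5 \<approx> 2n/5 vertices joined to an independent set of n - k vertices has
  cM2 = k (n - k) ((n - 1)^2 - k^2) > 0.18592 n (n - 1)^3. For an extremal G the two bounds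
  together force n - |M(G)| > 0.4648 n.
\<close>

lemma degree_less_card:
  assumes "simple_graph V E" "u \<in> V"
  shows "degree V E u < card V"
proof -
  have "finite V" using assms(1) unfolding simple_graph_def by simp
  moreover have "{v\<in>V. {u, v} \<in> E} \<subset> V"
  proof -
    have "{u, u} \<notin> E" using assms(1) unfolding simple_graph_def by force
    then show ?thesis using assms(2) by blast
  qed
  ultimately show ?thesis unfolding degree_def by (rule psubset_card_mono)
qed

lemma cM2_le_sum_degree_deficit:
  assumes "finite V" and deg_le: "\<And>u. u \<in> V \<Longrightarrow> degree V E u \<le> D"
  shows "cM2 V E \<le> (\<Sum>u\<in>V. int (degree V E u) * ((int D)\<^sup>2 - (int (degree V E u))\<^sup>2))"
proof -
  let ?d = "\<lambda>u. int (degree V E u)"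
  define deficit where "deficit u v = (if {u, v} \<in> E then (int D)\<^sup>2 - (?d u)\<^sup>2 else 0)" for u v
  have edge_term_le: "(if {u, v} \<in> E then \<bar>(?d u)\<^sup>2 - (?d v)\<^sup>2\<bar> else 0) \<le> deficit u v + deficit v u"
    if "u \<in> V" "v \<in> V" for u v
  proof -
    have "(?d u)\<^sup>2 \<le> (int D)\<^sup>2" "(?d v)\<^sup>2 \<le> (int D)\<^sup>2"
      using deg_le that by (simp_all add: power_mono)
    then show ?thesis unfolding deficit_def by (auto simp: insert_commute abs_le_iff)
  qed
  have row_sum: "(\<Sum>v\<in>V. deficit u v) = ?d u * ((int D)\<^sup>2 - (?d u)\<^sup>2)" for u
    using assms(1) by (simp add: deficit_def sum.If_cases Int_def degree_def)
  define S where "S = (\<Sum>u\<in>V. \<Sum>v\<in>V. if {u, v} \<in> E then \<bar>(?d u)\<^sup>2 - (?d v)\<^sup>2\<bar> else 0)"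
  have "S \<le> (\<Sum>u\<in>V. \<Sum>v\<in>V. deficit u v + deficit v u)"
    unfolding S_def by (intro sum_mono edge_term_le)
  also have "\<dots> = (\<Sum>u\<in>V. \<Sum>v\<in>V. deficit u v) + (\<Sum>u\<in>V. \<Sum>v\<in>V. deficit v u)"
    by (simp add: sum.distrib)
  also have "(\<Sum>u\<in>V. \<Sum>v\<in>V. deficit v u) = (\<Sum>u\<in>V. \<Sum>v\<in>V. deficit u v)"
    by (rule sum.swap)
  finally have "S \<le> 2 * (\<Sum>u\<in>V. ?d u * ((int D)\<^sup>2 - (?d u)\<^sup>2))"
    by (simp add: row_sum)
  then show ?thesis
    unfolding cM2_def S_def[symmetric] by linarith
qed

text \<open>This is 3 sqrt 3 d (N^2 - d^2) \<le> 2 N^3, sharp at d = N / sqrt 3, with 3 sqrt 3 replaced by 5.\<close>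
lemma cubic_deficit_bound:
  fixes d N :: "'a :: linordered_idom"
  assumes "0 \<le> d" "d \<le> N"
  shows "5 * d * (N\<^sup>2 - d\<^sup>2) \<le> 2 * N ^ 3"
proof -
  define a b where "a = N\<^sup>2" and "b = d\<^sup>2"
  have "0 \<le> b" "b \<le> a"
    unfolding a_def b_def using assms by (simp_all add: power_mono)
  have "(5 * d * (N\<^sup>2 - d\<^sup>2))\<^sup>2 = 25 * (b * (a - b)\<^sup>2)"
    unfolding a_def b_def by (simp add: power_mult_distrib)
  also have "\<dots> \<le> 27 * (b * (a - b)\<^sup>2)"
    using \<open>0 \<le> b\<close> by simp
  also have "\<dots> = 4 * a ^ 3 - (a - 3 * b)\<^sup>2 * (4 * a - 3 * b)"
    by (simp add: algebra_simps power2_eq_square power3_eq_cube)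
  also have "\<dots> \<le> 4 * a ^ 3"
    using \<open>0 \<le> b\<close> \<open>b \<le> a\<close> by simp
  also have "\<dots> = (2 * N ^ 3)\<^sup>2"
    unfolding a_def by (simp add: power_mult_distrib flip: power_mult)
  finally have "(5 * d * (N\<^sup>2 - d\<^sup>2))\<^sup>2 \<le> (2 * N ^ 3)\<^sup>2" .
  then show ?thesis
    by (rule power2_le_imp_le) (use assms in simp)
qed

lemma cM2_upper_bound:
  assumes "simple_graph V E" "V \<noteq> {}"
  shows "5 * cM2 V E \<le> 2 * int ((card V - card (max_deg_vertices V E)) * (card V - 1) ^ 3)"
proof -
  let ?d = "degree V E" and ?M = "max_deg_vertices V E" and ?N = "int (card V - 1)"
  define D where "D = Max (?d ` V)"
  have "finite V" using assms(1) unfolding simple_graph_def by simp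
  have deg_le: "?d u \<le> D" if "u \<in> V" for u
    unfolding D_def using \<open>finite V\<close> that by simp
  have "D \<in> ?d ` V"
    unfolding D_def using \<open>finite V\<close> assms(2) by simp
  then have "D \<le> card V - 1"
    using degree_less_card[OF assms(1)] by fastforce
  have vertex_term_le: "5 * (int (?d u) * ((int D)\<^sup>2 - (int (?d u))\<^sup>2))
      \<le> (if u \<in> ?M then 0 else 2 * ?N ^ 3)" if "u \<in> V" for u
  proof (cases "u \<in> ?M")
    case True
    then show ?thesis unfolding max_deg_vertices_def D_def by simp
  next
    case False
    have "int (?d u) * ((int D)\<^sup>2 - (int (?d u))\<^sup>2) \<le> int (?d u) * (?N\<^sup>2 - (int (?d u))\<^sup>2)"
      using \<open>D \<le> card V - 1\<close> by (intro mult_left_mono) (auto simp: power_mono)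
    moreover have "5 * int (?d u) * (?N\<^sup>2 - (int (?d u))\<^sup>2) \<le> 2 * ?N ^ 3"
      using deg_le[OF that] \<open>D \<le> card V - 1\<close> by (intro cubic_deficit_bound) simp_all
    ultimately show ?thesis using False by simp
  qed
  have "5 * cM2 V E \<le> 5 * (\<Sum>u\<in>V. int (?d u) * ((int D)\<^sup>2 - (int (?d u))\<^sup>2))"
    using cM2_le_sum_degree_deficit[OF \<open>finite V\<close> deg_le] by simp
  also have "\<dots> \<le> (\<Sum>u\<in>V. if u \<in> ?M then 0 else 2 * ?N ^ 3)"
    unfolding sum_distrib_left by (intro sum_mono vertex_term_le)
  also have "\<dots> = int (card (V - ?M)) * (2 * ?N ^ 3)"
    using \<open>finite V\<close> by (simp add: sum.If_cases Diff_eq)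
  also have "card (V - ?M) = card V - card ?M"
    using \<open>finite V\<close> by (intro card_Diff_subset) (auto simp: max_deg_vertices_def)
  finally show ?thesis by (simp add: mult_ac)
qed

definition complete_split_edges :: "'a set \<Rightarrow> 'a set \<Rightarrow> 'a set set" where
  "complete_split_edges V K = {{a, b} | a b. a \<in> K \<and> b \<in> V \<and> a \<noteq> b}"

lemma complete_split_edge_iff:
  assumes "u \<in> V" "v \<in> V"
  shows "{u, v} \<in> complete_split_edges V K \<longleftrightarrow> u \<noteq> v \<and> (u \<in> K \<or> v \<in> K)"
proof
  assume "{u, v} \<in> complete_split_edges V K"
  then obtain a b where "{u, v} = {a, b}" "a \<in> K" "a \<noteq> b"
    unfolding complete_split_edges_def by auto
  then show "u \<noteq> v \<and> (u \<in> K \<or> v \<in> K)" by (auto simp: doubleton_eq_iff)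
next
  assume "u \<noteq> v \<and> (u \<in> K \<or> v \<in> K)"
  then show "{u, v} \<in> complete_split_edges V K"
    unfolding complete_split_edges_def using assms by (auto intro: insert_commute)
qed

lemma simple_graph_complete_split:
  "finite V \<Longrightarrow> K \<subseteq> V \<Longrightarrow> simple_graph V (complete_split_edges V K)"
  unfolding simple_graph_def complete_split_edges_def by blast

lemma connected_graph_complete_split:
  assumes "K \<subseteq> V" "K \<noteq> {}"
  shows "connected_graph V (complete_split_edges V K)"
proof -
  obtain a where "a \<in> K" using assms(2) by blast
  let ?R = "{(x, y). {x, y} \<in> complete_split_edges V K}"
  have "(x, a) \<in> ?R\<^sup>* \<and> (a, x) \<in> ?R\<^sup>*" if "x \<in> V" for x
  proof (cases "x = a")
    case False
    then have "{x, a} \<in> complete_split_edges V K"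
      using complete_split_edge_iff[of x V a K] \<open>a \<in> K\<close> assms(1) that by blast
    then have "(x, a) \<in> ?R" "(a, x) \<in> ?R"
      by (simp_all add: insert_commute)
    then show ?thesis by blast
  qed simp
  then show ?thesis
    unfolding connected_graph_def using \<open>a \<in> K\<close> assms(1) by (blast intro: rtrancl_trans)
qed

lemma degree_complete_split:
  assumes "finite V" "K \<subseteq> V" "u \<in> V"
  shows "degree V (complete_split_edges V K) u = (if u \<in> K then card V - 1 else card K)"
proof (cases "u \<in> K")
  case True
  then have "{v\<in>V. {u, v} \<in> complete_split_edges V K} = V - {u}"
    using complete_split_edge_iff[OF assms(3)] by blast
  then show ?thesis
    unfolding degree_def using True assms(1,3) by simp
next
  case False
  then have "{v\<in>V. {u, v} \<in> complete_split_edges V K} = K"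
    using complete_split_edge_iff[OF assms(3)] assms(2) by blast
  then show ?thesis
    unfolding degree_def using False by simp
qed

text \<open>If K = V the truncated subtraction (card V - 1)^2 - (card K)^2 is harmless: the factor
  card V - card K vanishes.\<close>
lemma cM2_complete_split:
  assumes "finite V" "K \<subseteq> V"
  shows "cM2 V (complete_split_edges V K)
    = int (card K * (card V - card K) * ((card V - 1)\<^sup>2 - (card K)\<^sup>2))"
proof -
  let ?E = "complete_split_edges V K" and ?k = "card K" and ?n = "card V"
  define X where "X = int ((?n - 1)\<^sup>2 - ?k\<^sup>2)"
  have "finite K" using assms finite_subset by blast
  have edge_term: "(if {u, v} \<in> ?E then \<bar>(int (degree V ?E u))\<^sup>2 - (int (degree V ?E v))\<^sup>2\<bar> else 0)
      = (if (u \<in> K) \<noteq> (v \<in> K) then X else 0)" if "u \<in> V" "v \<in> V" for u v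
  proof (cases "(u \<in> K) \<noteq> (v \<in> K)")
    case True
    then have "{u, v} \<in> ?E"
      using complete_split_edge_iff[OF that] by auto
    have "K \<subset> V" using True that assms(2) by auto
    then have "?k < ?n" by (rule psubset_card_mono[OF assms(1)])
    have "\<bar>(int (degree V ?E u))\<^sup>2 - (int (degree V ?E v))\<^sup>2\<bar> = \<bar>(int (?n - 1))\<^sup>2 - (int ?k)\<^sup>2\<bar>"
      using True that assms by (cases "u \<in> K") (simp_all add: degree_complete_split abs_minus_commute)
    also have "\<dots> = X"
      unfolding X_def using \<open>?k < ?n\<close> by (simp add: of_nat_diff power_mono)
    finally show ?thesis using \<open>{u, v} \<in> ?E\<close> True by simp
  next
    case False
    then have "(u \<in> K \<and> v \<in> K \<and> degree V ?E u = degree V ?E v) \<or> {u, v} \<notin> ?E"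
      using that assms complete_split_edge_iff[OF that] by (auto simp: degree_complete_split)
    then show ?thesis
      using False by auto
  qed
  have "card (V - K) = ?n - ?k"
    using assms \<open>finite K\<close> by (simp add: card_Diff_subset)
  have row_sum: "(\<Sum>v\<in>V. if (u \<in> K) \<noteq> (v \<in> K) then X else 0)
      = (if u \<in> K then int (?n - ?k) * X else int ?k * X)" for u
  proof -
    have "{v\<in>V. (u \<in> K) \<noteq> (v \<in> K)} = (if u \<in> K then V - K else K)"
      using assms(2) by auto
    then show ?thesis
      using assms(1) \<open>card (V - K) = ?n - ?k\<close> by (simp add: sum.inter_filter[symmetric])
  qed
  have "(\<Sum>u\<in>V. \<Sum>v\<in>V. if {u, v} \<in> ?E then \<bar>(int (degree V ?E u))\<^sup>2 - (int (degree V ?E v))\<^sup>2\<bar> else 0)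
      = (\<Sum>u\<in>V. \<Sum>v\<in>V. if (u \<in> K) \<noteq> (v \<in> K) then X else 0)"
    by (intro sum.cong refl edge_term)
  also have "\<dots> = (\<Sum>u\<in>V. if u \<in> K then int (?n - ?k) * X else int ?k * X)"
    by (simp only: row_sum)
  also have "\<dots> = 2 * (int ?k * int (?n - ?k) * X)"
    using assms \<open>card (V - K) = ?n - ?k\<close>
    by (simp add: sum.If_cases Int_absorb1 Diff_eq[symmetric])
  finally show ?thesis
    unfolding cM2_def X_def by simp
qed

text \<open>In each residue class of n modulo 5 the difference of the two sides is a polynomial in
  q = (n - 4) div 5 with positive coefficients.\<close>
lemma two_fifths_split_bound:
  fixes n :: nat
  assumes "4 \<le> n"
  defines "k \<equiv> (2 * n + 1) div 5"
  shows "4648 * n * (n - 1) ^ 3 < 25000 * k * (n - k) * ((n - 1)\<^sup>2 - k\<^sup>2)"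
proof -
  obtain q r where n: "n = 5 * q + r" and r: "r \<in> {4..8}"
    using assms(1) by (intro that[of "(n - 4) div 5" "(n - 4) mod 5 + 4"]) auto
  have k: "k = 2 * q + (2 * r + 1) div 5"
    unfolding k_def n by simp
  from r have "r = 4 \<or> r = 5 \<or> r = 6 \<or> r = 7 \<or> r = 8" by auto
  then show ?thesis
    unfolding k n by (elim disjE) (simp_all add: algebra_simps power2_eq_square power3_eq_cube)
qed

theorem corollary1:
  fixes V :: "'a set" and E :: "'a set set" and n :: nat
  assumes "n \<ge> 4"
    and "simple_graph V E" and "connected_graph V E" and "card V = n"
    and "\<And>(V' :: 'a set) (E' :: 'a set set). simple_graph V' E' \<Longrightarrow> connected_graph V' E' \<Longrightarrow> card V' = n
           \<Longrightarrow> cM2 V' E' \<le> cM2 V E"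
  shows "real (card (max_deg_vertices V E)) < 5352 / 10000 * real n"
proof (rule ccontr)
  let ?m = "card (max_deg_vertices V E)" and ?k = "(2 * n + 1) div 5"
  assume "\<not> ?thesis"
  then have "5352 * n \<le> 10000 * ?m"
    by linarith
  have "finite V" "V \<noteq> {}"
    using assms(1,2,4) unfolding simple_graph_def by auto
  have "?k \<le> card V"
    using assms(4) by presburger
  then obtain K where "K \<subseteq> V" "card K = ?k"
    by (rule obtain_subset_with_card_n)
  then have "K \<noteq> {}"
    using assms(1) by auto
  have "cM2 V (complete_split_edges V K) \<le> cM2 V E"
    using assms(4,5) simple_graph_complete_split connected_graph_complete_split
      \<open>finite V\<close> \<open>K \<subseteq> V\<close> \<open>K \<noteq> {}\<close> by blast
  then have "int (?k * (n - ?k) * ((n - 1)\<^sup>2 - ?k\<^sup>2)) \<le> cM2 V E"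
    unfolding cM2_complete_split[OF \<open>finite V\<close> \<open>K \<subseteq> V\<close>] \<open>card K = ?k\<close> assms(4) .
  moreover have "5 * cM2 V E \<le> 2 * int ((n - ?m) * (n - 1) ^ 3)"
    using cM2_upper_bound[OF assms(2) \<open>V \<noteq> {}\<close>] assms(4) by simp
  moreover have "?m \<le> n"
    using card_mono[OF \<open>finite V\<close>] assms(4) unfolding max_deg_vertices_def by fastforce
  then have "10000 * (n - ?m) \<le> 4648 * n"
    using \<open>5352 * n \<le> 10000 * ?m\<close> by linarith
  then have "10000 * ((n - ?m) * (n - 1) ^ 3) \<le> 4648 * n * (n - 1) ^ 3"
    by (metis mult.assoc mult_right_mono zero_le)
  ultimately show False
    using two_fifths_split_bound[OF assms(1)] by linarith
qed

end
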